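(* Let $u:\mathbb{R}_{\ge 0}\to[0,1]$ be non-increasing with $u(0)=1$ and $\lim_{t\to\infty}u(t)=0$, and let there be $n$ algorithms with runtime distributions $\mathcal{D}_1,\dots,\mathcal{D}_n$ and expected utilities $U_i=\mathbb{E}_{t\sim\mathcal{D}_i}[u(t)]$. Given $\epsilon,\delta\in(0,1)$ and a captime $\kappa$ with $u(\kappa)<\epsilon$, the Naive procedure sets $m=\Big\lceil\frac{2\ln(2n/\delta)}{(\epsilon-u(\kappa))^2}\Big\rceil$, runs each algorithm $i$ on $m$ instances at captime $\kappa$, obtaining independent capped samples $t_{ij}(\kappa)=\min(t_{ij},\kappa)$ with $t_{ij}\sim\mathcal{D}_i$, computes $\widehat{U}_{im}(\kappa)=\frac1m\sum_{j=1}^m u(t_{ij}(\kappa))$, and returns $i^*\in\arg\max_i\widehat{U}_{im}(\kappa)$. Then with probability at least $1-\delta$ the Naive procedure returns an $\epsilon$-optimal algorithm, and the number $m$ of $\kappa$-capped samples it takes of each algorithm satisfies $$2\sqrt{\frac{\ln(2n/\delta)}{2m}}+u(\kappa)\le\epsilon.$$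
   Context: The runtime distribution $\mathcal{D}_i$ of algorithm $i$ is induced by drawing instances i.i.d. from a fixed instance distribution (and any internal randomness). An algorithm $i^*$ is $\epsilon$-optimal if $U_{i^*}\ge\max_iU_i-\epsilon$. *)

theory Defs
  imports "HOL-Probability.Probability"
begin

definition runtime_space :: "real measure" where
  "runtime_space = restrict_space borel {0..}"

definition exp_utility :: "(real \<Rightarrow> real) \<Rightarrow> real measure \<Rightarrow> real" where
  "exp_utility u D = (\<integral>t. u t \<partial>D)"

definition emp_utility :: "(real \<Rightarrow> real) \<Rightarrow> real \<Rightarrow> nat \<Rightarrow> (nat \<Rightarrow> nat \<Rightarrow> 'a \<Rightarrow> real) \<Rightarrow> nat \<Rightarrow> 'a \<Rightarrow> real" where
  "emp_utility u \<kappa> m T i \<omega> = (\<Sum>j<m. u (min (T i j \<omega>) \<kappa>)) / real m"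

end

theory Submission
  imports Defs
begin

text \<open>
  Capping at \<open>\<kappa>\<close> moves utilities only within \<open>[0, u \<kappa>]\<close>: for \<open>t \<ge> 0\<close> we have
  \<open>u t \<le> u (min t \<kappa>) \<le> u t + u \<kappa>\<close>, so the capped expected utility \<open>C\<^sub>i\<close> satisfies
  \<open>U\<^sub>i \<le> C\<^sub>i \<le> U\<^sub>i + u \<kappa>\<close>. The capped samples of algorithm \<open>i\<close> are i.i.d. with values in
  \<open>[0, 1]\<close>, so by Hoeffding's inequality their mean is at distance at least
  \<open>\<eta> = sqrt (ln (2n/\<delta>) / (2m))\<close> from \<open>C\<^sub>i\<close> with probability at most \<open>\<delta>/n\<close>; by the union bound,
  with probability at least \<open>1 - \<delta>\<close> all \<open>n\<close> estimates are \<open>\<eta>\<close>-accurate. On that event the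
  empirical maximiser loses at most \<open>2\<eta> + u \<kappa>\<close> against the best algorithm, and the choice
  of \<open>m\<close> makes this at most \<open>\<epsilon>\<close>.
\<close>

lemma space_runtime_space: "space runtime_space = {0..}"
  by (simp add: runtime_space_def space_restrict_space)

lemma borel_measurable_runtime_space_antimono:
  fixes f :: "real \<Rightarrow> real"
  assumes "\<And>s t. 0 \<le> s \<Longrightarrow> s \<le> t \<Longrightarrow> f t \<le> f s"
  shows "f \<in> borel_measurable runtime_space"
proof -
  have "mono_on {0..} (\<lambda>t. - f t)"
    using assms by (auto simp: mono_on_def)
  then have "(\<lambda>t. - f t) \<in> borel_measurable runtime_space"
    unfolding runtime_space_def by (rule borel_measurable_mono_on_fnc)
  then have "(\<lambda>t. - (- f t)) \<in> borel_measurable runtime_space"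
    by measurable
  then show ?thesis
    by simp
qed

lemma antimono_capped_bounds:
  fixes u :: "real \<Rightarrow> real"
  assumes u_nonneg: "\<And>t. t \<ge> 0 \<Longrightarrow> 0 \<le> u t"
    and u_mono: "\<And>s t. 0 \<le> s \<Longrightarrow> s \<le> t \<Longrightarrow> u t \<le> u s"
    and "0 \<le> \<kappa>" "0 \<le> t"
  shows "u t \<le> u (min t \<kappa>)" and "u (min t \<kappa>) \<le> u t + u \<kappa>"
  using assms u_mono[of t \<kappa>] u_nonneg[of t] by (auto simp: min_def)

lemma exp_utility_capped_bounds:
  fixes u :: "real \<Rightarrow> real" and D :: "real measure"
  assumes D: "prob_space D" "sets D = sets runtime_space"
    and u_range: "\<And>t. t \<ge> 0 \<Longrightarrow> 0 \<le> u t \<and> u t \<le> 1"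
    and u_mono: "\<And>s t. 0 \<le> s \<Longrightarrow> s \<le> t \<Longrightarrow> u t \<le> u s"
    and \<kappa>: "0 \<le> \<kappa>"
  shows "exp_utility u D \<le> (\<integral>t. u (min t \<kappa>) \<partial>D)"
    and "(\<integral>t. u (min t \<kappa>) \<partial>D) \<le> exp_utility u D + u \<kappa>"
proof -
  interpret prob_space D by (rule D(1))
  have space_D: "space D = {0..}"
    using sets_eq_imp_space_eq[OF D(2)] space_runtime_space by simp
  have bounded_integrable: "integrable D f"
    if "\<And>s t. 0 \<le> s \<Longrightarrow> s \<le> t \<Longrightarrow> f t \<le> f s" "\<And>t. t \<ge> 0 \<Longrightarrow> 0 \<le> f t \<and> f t \<le> 1"
    for f :: "real \<Rightarrow> real"
  proof (rule integrable_const_bound[where B = 1])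
    show "f \<in> borel_measurable D"
      unfolding measurable_cong_sets[OF D(2) refl] by (rule borel_measurable_runtime_space_antimono[OF that(1)])
    show "AE t in D. norm (f t) \<le> 1"
      using that(2) by (intro AE_I2) (simp add: space_D)
  qed
  have capped_mono: "u (min t \<kappa>) \<le> u (min s \<kappa>)" if "0 \<le> s" "s \<le> t" for s t
    using u_mono[of "min s \<kappa>" "min t \<kappa>"] that \<kappa> by simp
  have int_u: "integrable D u"
    using bounded_integrable[of u] u_mono u_range by blast
  have int_capped: "integrable D (\<lambda>t. u (min t \<kappa>))"
    using bounded_integrable[of "\<lambda>t. u (min t \<kappa>)"] capped_mono u_range \<kappa> by simp
  have u_nonneg: "0 \<le> u t" if "0 \<le> t" for t
    using u_range[OF that] by simp
  have pointwise: "u t \<le> u (min t \<kappa>)" "u (min t \<kappa>) \<le> u t + u \<kappa>" if "t \<in> space D" for t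
    using antimono_capped_bounds[of u \<kappa> t, OF u_nonneg u_mono \<kappa>] that by (simp_all add: space_D)
  show "exp_utility u D \<le> (\<integral>t. u (min t \<kappa>) \<partial>D)"
    unfolding exp_utility_def by (rule integral_mono[OF int_u int_capped pointwise(1)])
  have "(\<integral>t. u (min t \<kappa>) \<partial>D) \<le> (\<integral>t. u t + u \<kappa> \<partial>D)"
    using int_u by (intro integral_mono[OF int_capped _ pointwise(2)]) simp
  also have "\<dots> = exp_utility u D + u \<kappa>"
    using int_u by (simp add: exp_utility_def prob_space)
  finally show "(\<integral>t. u (min t \<kappa>) \<partial>D) \<le> exp_utility u D + u \<kappa>" .
qed

lemma (in prob_space) Hoeffding_sample_mean_abs_ge:
  fixes g :: "'b \<Rightarrow> real" and \<eta> :: real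
  assumes J: "finite J" "J \<noteq> {}"
    and indep: "indep_vars (\<lambda>_. N) S J"
    and distr: "\<And>j. j \<in> J \<Longrightarrow> distr M N (S j) = D"
    and g: "g \<in> borel_measurable N" "\<And>x. x \<in> space N \<Longrightarrow> 0 \<le> g x \<and> g x \<le> 1"
    and \<eta>_nonneg: "\<eta> \<ge> 0"
  shows "prob {\<omega> \<in> space M. \<eta> \<le> \<bar>(\<Sum>j\<in>J. g (S j \<omega>)) / card J - (\<integral>x. g x \<partial>D)\<bar>}
           \<le> 2 * exp (- 2 * real (card J) * \<eta>\<^sup>2)"
proof -
  obtain j\<^sub>0 where j\<^sub>0: "j\<^sub>0 \<in> J"
    using J(2) by blast
  have S_rv: "S j \<in> measurable M N" if "j \<in> J" for j
    using indep that unfolding indep_vars_def by blast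
  have distr_g: "distr M borel (\<lambda>\<omega>. g (S j \<omega>)) = distr D borel g" if "j \<in> J" for j
    using distr_distr[OF g(1) S_rv[OF that]] distr[OF that] by (simp add: comp_def)
  interpret Hoeffding_ineq_iid M J "\<lambda>j \<omega>. g (S j \<omega>)" "\<lambda>\<omega>. g (S j\<^sub>0 \<omega>)" 0 1
    "expectation (\<lambda>\<omega>. g (S j\<^sub>0 \<omega>))"
  proof unfold_locales
    show "finite J"
      by (rule J(1))
    show "indep_vars (\<lambda>_. borel) (\<lambda>j \<omega>. g (S j \<omega>)) J"
      by (rule indep_vars_compose2[OF indep]) (rule g(1))
    show "random_variable borel (\<lambda>\<omega>. g (S j\<^sub>0 \<omega>))"
      using measurable_compose[OF S_rv[OF j\<^sub>0] g(1)] .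
    show "AE \<omega> in M. g (S j\<^sub>0 \<omega>) \<in> {0..1}"
      using g(2) measurable_space[OF S_rv[OF j\<^sub>0]] by (intro AE_I2) auto
  next
    fix j assume "j \<in> J"
    then show "distr M borel (\<lambda>\<omega>. g (S j \<omega>)) = distr M borel (\<lambda>\<omega>. g (S j\<^sub>0 \<omega>))"
      using distr_g j\<^sub>0 by simp
  qed
  have expectation_g: "expectation (\<lambda>\<omega>. g (S j\<^sub>0 \<omega>)) = (\<integral>x. g x \<partial>D)"
    using integral_distr[OF S_rv[OF j\<^sub>0] g(1)] distr[OF j\<^sub>0] by simp
  show ?thesis
    using Hoeffding_ineq_abs_ge'[OF \<eta>_nonneg zero_less_one J(2)] unfolding expectation_g
    by simp
qed

lemma (in prob_space) Hoeffding_row_mean_abs_ge: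
  fixes g :: "'b \<Rightarrow> real" and \<eta> :: real and T :: "'i \<Rightarrow> nat \<Rightarrow> 'a \<Rightarrow> 'b"
  assumes indep: "indep_vars (\<lambda>_. N) (\<lambda>(i, j). T i j) (I \<times> {..<m})"
    and "i \<in> I" "0 < m"
    and distr: "\<And>j. j < m \<Longrightarrow> distr M N (T i j) = D"
    and g: "g \<in> borel_measurable N" "\<And>x. x \<in> space N \<Longrightarrow> 0 \<le> g x \<and> g x \<le> 1"
    and "0 \<le> \<eta>"
  shows "prob {\<omega> \<in> space M. \<eta> \<le> \<bar>(\<Sum>j<m. g (T i j \<omega>)) / m - (\<integral>x. g x \<partial>D)\<bar>}
           \<le> 2 * exp (- 2 * real m * \<eta>\<^sup>2)"
proof -
  have indep_row: "indep_vars (\<lambda>_. N) (\<lambda>(i, j). T i j) ({i} \<times> {..<m})"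
    by (rule indep_vars_subset[OF indep]) (use \<open>i \<in> I\<close> in auto)
  have "prob {\<omega> \<in> space M. \<eta> \<le> \<bar>(\<Sum>p\<in>{i} \<times> {..<m}. g ((\<lambda>(i, j). T i j) p \<omega>)) /
                  card ({i} \<times> {..<m}) - (\<integral>x. g x \<partial>D)\<bar>}
               \<le> 2 * exp (- 2 * real (card ({i} \<times> {..<m})) * \<eta>\<^sup>2)"
    by (rule Hoeffding_sample_mean_abs_ge[OF _ _ indep_row]) (use \<open>0 < m\<close> distr g \<open>0 \<le> \<eta>\<close> in auto)
  moreover have "{i} \<times> {..<m} = Pair i ` {..<m}" "inj_on (Pair i) {..<m}"
    by (auto simp: inj_on_def)
  ultimately show ?thesis
    by (simp add: sum.reindex card_image)
qed

lemma (in prob_space) prob_compl_union_ge: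
  fixes p :: real
  assumes "finite I" "\<And>i. i \<in> I \<Longrightarrow> A i \<in> events" "\<And>i. i \<in> I \<Longrightarrow> prob (A i) \<le> p"
  shows "1 - card I * p \<le> prob (space M - (\<Union>i\<in>I. A i))"
proof -
  have "prob (\<Union>i\<in>I. A i) \<le> (\<Sum>i\<in>I. prob (A i))"
    using assms(1,2) by (intro finite_measure_subadditive_finite) auto
  also have "\<dots> \<le> card I * p"
    using sum_mono[of I "\<lambda>i. prob (A i)" "\<lambda>_. p"] assms(3) by simp
  moreover have "(\<Union>i\<in>I. A i) \<in> events"
    using assms(1,2) by auto
  ultimately show ?thesis
    using prob_compl by simp
qed

lemma (in prob_space) prob_all_row_means_close:
  fixes g :: "'b \<Rightarrow> real" and T :: "'i \<Rightarrow> nat \<Rightarrow> 'a \<Rightarrow> 'b" and D :: "'i \<Rightarrow> 'b measure"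
    and \<delta> :: real
  assumes indep: "indep_vars (\<lambda>_. N) (\<lambda>(i, j). T i j) (I \<times> {..<m})"
    and I: "finite I" "I \<noteq> {}" and "0 < m" and \<delta>: "0 < \<delta>" "\<delta> \<le> 1"
    and distr: "\<And>i j. i \<in> I \<Longrightarrow> j < m \<Longrightarrow> distr M N (T i j) = D i"
    and g: "g \<in> borel_measurable N" "\<And>x. x \<in> space N \<Longrightarrow> 0 \<le> g x \<and> g x \<le> 1"
  shows "1 - \<delta> \<le> prob {\<omega> \<in> space M. \<forall>i\<in>I.
           \<bar>(\<Sum>j<m. g (T i j \<omega>)) / m - (\<integral>x. g x \<partial>D i)\<bar> < sqrt (ln (2 * card I / \<delta>) / (2 * m))}"
proof -
  define L where "L = ln (2 * card I / \<delta>)"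
  define \<eta> where "\<eta> = sqrt (L / (2 * m))"
  define bad where "bad i = {\<omega> \<in> space M. \<eta> \<le> \<bar>(\<Sum>j<m. g (T i j \<omega>)) / m - (\<integral>x. g x \<partial>D i)\<bar>}" for i
  have "card I \<ge> 1"
    using I by (simp add: Suc_le_eq card_gt_0_iff)
  \<comment> \<open>\<open>\<delta> \<le> 1\<close> keeps \<open>L\<close> nonnegative; on negative arguments \<open>sqrt\<close> is negative.\<close>
  then have "0 \<le> L"
    using \<delta> by (simp add: L_def)
  have "0 \<le> \<eta>"
    using \<open>0 \<le> L\<close> by (simp add: \<eta>_def)
  have "prob (bad i) \<le> 2 * exp (- 2 * real m * \<eta>\<^sup>2)" if "i \<in> I" for i
    unfolding bad_def by (rule Hoeffding_row_mean_abs_ge[OF indep that \<open>0 < m\<close> distr[OF that] g \<open>0 \<le> \<eta>\<close>])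
  also have "2 * exp (- 2 * real m * \<eta>\<^sup>2) = 2 * exp (- L)"
    using \<open>0 < m\<close> \<open>0 \<le> L\<close> by (simp add: \<eta>_def)
  also have "\<dots> = \<delta> / card I"
    using \<open>card I \<ge> 1\<close> \<delta> by (simp add: L_def exp_minus)
  finally have bad_prob: "prob (bad i) \<le> \<delta> / card I" if "i \<in> I" for i
    using that .
  have bad_events: "bad i \<in> events" if "i \<in> I" for i
  proof -
    have "T i j \<in> measurable M N" if "j < m" for j
      using indep \<open>i \<in> I\<close> that unfolding indep_vars_def by force
    then have "(\<lambda>\<omega>. (\<Sum>j<m. g (T i j \<omega>)) / m) \<in> borel_measurable M"
      using measurable_compose g(1)
      by (intro borel_measurable_divide borel_measurable_sum borel_measurable_const) blast+
    then show ?thesis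
      unfolding bad_def by measurable
  qed
  have "space M - (\<Union>i\<in>I. bad i) = {\<omega> \<in> space M. \<forall>i\<in>I.
           \<bar>(\<Sum>j<m. g (T i j \<omega>)) / m - (\<integral>x. g x \<partial>D i)\<bar> < sqrt (ln (2 * card I / \<delta>) / (2 * m))}"
    by (auto simp: bad_def not_le \<eta>_def L_def)
  moreover have "1 - card I * (\<delta> / card I) \<le> prob (space M - (\<Union>i\<in>I. bad i))"
    by (rule prob_compl_union_ge[OF I(1)]) (use bad_events bad_prob in auto)
  moreover have "card I * (\<delta> / card I) = \<delta>"
    using \<open>card I \<ge> 1\<close> by simp
  ultimately show ?thesis
    by simp
qed

lemma sample_size_ceiling_bound:
  fixes L c :: real and m :: nat
  assumes "0 < L" "0 < c" "m = nat \<lceil>2 * L / c\<^sup>2\<rceil>"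
  shows "0 < m" and "2 * sqrt (L / (2 * real m)) \<le> c"
proof -
  have "0 < 2 * L / c\<^sup>2"
    using assms(1,2) by simp
  moreover have m_ge: "2 * L / c\<^sup>2 \<le> real m"
    using assms(3) real_nat_ceiling_ge by simp
  ultimately show "0 < m"
    by simp
  then have "L / (2 * real m) \<le> (c / 2)\<^sup>2"
    using m_ge assms(2) by (simp add: field_simps power2_eq_square)
  then have "sqrt (L / (2 * real m)) \<le> c / 2"
    using \<open>0 < c\<close> by (intro real_le_lsqrt) auto
  then show "2 * sqrt (L / (2 * real m)) \<le> c"
    by simp
qed

lemma argmax_of_biased_estimates_near_optimal:
  fixes est C U :: "'i \<Rightarrow> real"
  assumes "finite I" "i \<in> I"
    and est_close: "\<And>k. k \<in> I \<Longrightarrow> \<bar>est k - C k\<bar> < \<eta>"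
    and bias: "\<And>k. k \<in> I \<Longrightarrow> U k \<le> C k \<and> C k \<le> U k + \<beta>"
    and argmax: "\<And>k. k \<in> I \<Longrightarrow> est k \<le> est i"
    and "2 * \<eta> + \<beta> \<le> \<epsilon>"
  shows "Max (U ` I) - \<epsilon> \<le> U i"
proof -
  obtain b where b: "b \<in> I" "Max (U ` I) = U b"
    using Max_in[of "U ` I"] \<open>finite I\<close> \<open>i \<in> I\<close> by blast
  have "U b \<le> C b" "C b < est b + \<eta>" "est b \<le> est i" "est i < C i + \<eta>" "C i \<le> U i + \<beta>"
    using bias[OF b(1)] est_close[OF b(1)] argmax[OF b(1)] est_close[OF \<open>i \<in> I\<close>]
      bias[OF \<open>i \<in> I\<close>] by auto
  then show ?thesis
    using b(2) \<open>2 * \<eta> + \<beta> \<le> \<epsilon>\<close> by linarith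
qed

lemma borel_measurable_emp_utility:
  assumes "(\<lambda>t. u (min t \<kappa>)) \<in> borel_measurable N" "\<And>j. j < m \<Longrightarrow> T i j \<in> measurable M N"
  shows "emp_utility u \<kappa> m T i \<in> borel_measurable M"
proof -
  have "(\<lambda>\<omega>. u (min (T i j \<omega>) \<kappa>)) \<in> borel_measurable M" if "j < m" for j
    using measurable_compose[OF assms(2)[OF that] assms(1)] by simp
  then show ?thesis
    unfolding emp_utility_def by (intro borel_measurable_divide borel_measurable_sum) auto
qed

lemma sets_Collect_argmax_imp:
  fixes f :: "nat \<Rightarrow> 'a \<Rightarrow> real"
  assumes "\<And>i. i < n \<Longrightarrow> f i \<in> borel_measurable M"
  shows "{\<omega> \<in> space M. \<forall>k < n. (\<forall>i < n. f i \<omega> \<le> f k \<omega>) \<longrightarrow> P k} \<in> sets M"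
  using assms by measurable

theorem theorem3:
  fixes u :: "real \<Rightarrow> real" and n m :: nat and \<epsilon> \<delta> \<kappa> :: real
    and D :: "nat \<Rightarrow> real measure"
    and M :: "'a measure" and T :: "nat \<Rightarrow> nat \<Rightarrow> 'a \<Rightarrow> real"
  assumes u_range: "\<And>t. t \<ge> 0 \<Longrightarrow> 0 \<le> u t \<and> u t \<le> 1"
    and u_mono: "\<And>s t. 0 \<le> s \<Longrightarrow> s \<le> t \<Longrightarrow> u t \<le> u s"
    and u_0: "u 0 = 1"
    and u_lim: "(u \<longlongrightarrow> 0) at_top"
    and n_pos: "n \<ge> 1"
    and D_prob: "\<And>i. i < n \<Longrightarrow> prob_space (D i)"
    and D_sets: "\<And>i. i < n \<Longrightarrow> sets (D i) = sets runtime_space"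
    and eps: "0 < \<epsilon>" "\<epsilon> < 1"
    and delta: "0 < \<delta>" "\<delta> < 1"
    and kappa: "\<kappa> \<ge> 0" "u \<kappa> < \<epsilon>"
    and m_def: "m = nat \<lceil>2 * ln (2 * real n / \<delta>) / (\<epsilon> - u \<kappa>)^2\<rceil>"
    and M_prob: "prob_space M"
    and T_indep: "prob_space.indep_vars M (\<lambda>_. runtime_space) (\<lambda>(i, j). T i j)
                    ({..<n} \<times> {..<m})"
    and T_distr: "\<And>i j. i < n \<Longrightarrow> j < m \<Longrightarrow> distr M runtime_space (T i j) = D i"
  shows "measure M {\<omega> \<in> space M. \<forall>i\<^sub>s < n.
              (\<forall>i < n. emp_utility u \<kappa> m T i \<omega> \<le> emp_utility u \<kappa> m T i\<^sub>s \<omega>) \<longrightarrow>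
              exp_utility u (D i\<^sub>s) \<ge> Max ((\<lambda>i. exp_utility u (D i)) ` {..<n}) - \<epsilon>}
           \<ge> 1 - \<delta>
       \<and> 2 * sqrt (ln (2 * real n / \<delta>) / (2 * real m)) + u \<kappa> \<le> \<epsilon>"
proof -
  interpret prob_space M by (rule M_prob)
  define \<eta> where "\<eta> = sqrt (ln (2 * real n / \<delta>) / (2 * real m))"
  define C where "C i = (\<integral>t. u (min t \<kappa>) \<partial>D i)" for i
  define G where "G = {\<omega> \<in> space M. \<forall>i\<in>{..<n}. \<bar>emp_utility u \<kappa> m T i \<omega> - C i\<bar> < \<eta>}"
  define S where "S = {\<omega> \<in> space M. \<forall>i\<^sub>s < n.
              (\<forall>i < n. emp_utility u \<kappa> m T i \<omega> \<le> emp_utility u \<kappa> m T i\<^sub>s \<omega>) \<longrightarrow>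
              exp_utility u (D i\<^sub>s) \<ge> Max ((\<lambda>i. exp_utility u (D i)) ` {..<n}) - \<epsilon>}"
  have "0 < ln (2 * real n / \<delta>)"
    using n_pos delta by simp
  then have "0 < m" and deviation: "2 * \<eta> + u \<kappa> \<le> \<epsilon>"
    using sample_size_ceiling_bound[OF _ _ m_def] kappa(2) by (simp_all add: \<eta>_def)
  have capped_meas: "(\<lambda>t. u (min t \<kappa>)) \<in> borel_measurable runtime_space"
    by (rule borel_measurable_runtime_space_antimono) (use u_mono kappa(1) in \<open>simp add: min_def\<close>)
  have bias: "exp_utility u (D i) \<le> C i \<and> C i \<le> exp_utility u (D i) + u \<kappa>" if "i < n" for i
    using exp_utility_capped_bounds[where u = u, OF D_prob[OF that] D_sets[OF that] u_range u_mono kappa(1)]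
    by (simp add: C_def)
  have "{..<n} \<noteq> {}"
    using n_pos by (simp add: lessThan_empty_iff)
  then have "1 - \<delta> \<le> prob G"
    using prob_all_row_means_close[OF T_indep _ _ \<open>0 < m\<close> delta(1) less_imp_le[OF delta(2)]
        T_distr capped_meas] u_range kappa(1)
    by (simp add: G_def emp_utility_def C_def \<eta>_def space_runtime_space)
  moreover have "G \<subseteq> S"
  proof
    fix \<omega> assume \<omega>: "\<omega> \<in> G"
    have "Max ((\<lambda>i. exp_utility u (D i)) ` {..<n}) - \<epsilon> \<le> exp_utility u (D i\<^sub>s)"
      if "i\<^sub>s < n" "\<forall>i<n. emp_utility u \<kappa> m T i \<omega> \<le> emp_utility u \<kappa> m T i\<^sub>s \<omega>" for i\<^sub>s
      using that \<omega> deviation bias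
      by (intro argmax_of_biased_estimates_near_optimal[where est = "\<lambda>i. emp_utility u \<kappa> m T i \<omega>"])
        (auto simp: G_def)
    with \<omega> show "\<omega> \<in> S"
      by (auto simp: G_def S_def)
  qed
  moreover have "S \<in> events"
    unfolding S_def
  proof (intro sets_Collect_argmax_imp borel_measurable_emp_utility[OF capped_meas])
    show "T i j \<in> measurable M runtime_space" if "i < n" "j < m" for i j
      using T_indep that unfolding indep_vars_def by force
  qed
  ultimately have "1 - \<delta> \<le> prob S"
    using finite_measure_mono by (meson order_trans)
  with deviation show ?thesis
    unfolding S_def \<eta>_def by blast
qed

end
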